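(* Let $G$ be an acyclic mixed graph with mixed components $G_1,\dots,G_k$. If $G$ is HTC-identifiable, then every $G_j$ is HTC-identifiable. Moreover, $G$ is HTC-infinite-to-one if and only if some $G_j$ is HTC-infinite-to-one.
   Context: A mixed graph is $G=(V,D,B)$ with $V$ a finite node set, $D$ directed edges $v\to w$, $B$ symmetric bidirected edges $v\leftrightarrow w$, no self-loops; acyclic if $(V,D)$ has no directed cycle. $\mathrm{pa}(v)=\{w:w\to v\in D\}$, $\mathrm{sib}(v)=\{w:w\leftrightarrow v\in B\}$. A half-trek from $y$ to $w$ is a path $y\leftrightarrow w_0\to w_1\to\cdots\to w_r=w$ (left side $\{y\}$, right side $\{w_0,\dots,w_r\}$) or $y\to w_1\to\cdots\to w_r=w$, $r\ge0$ (left side $\{y\}$, right side $\{y,w_1,\dots,w_r\}$). $\mathrm{htr}(v)$ is the set of $w\in V\setminus(\{v\}\cup\mathrm{sib}(v))$ reachable from $v$ by a half-trek. A system of half-treks from $X$ to $Y$: half-treks with distinct sources forming $X$ and distinct targets forming $Y$; no sided intersection: pairwise disjoint left sides and pairwise disjoint right sides. $Y$ satisfies the half-trek criterion w.r.t. $v$ if $|Y|=|\mathrm{pa}(v)|$, $Y\cap(\{v\}\cup\mathrm{sib}(v))=\emptyset$, and there is a system of half-treks with no sided intersection from $Y$ to $\mathrm{pa}(v)$. $G$ is HTC-identifiable if there exist $(Y_v:v\in V)$, each satisfying the half-trek criterion w.r.t. $v$, and a total order $\prec$ on $V$ with $w\prec v$ whenever $w\in Y_v\cap\mathrm{htr}(v)$.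 $G$ is HTC-infinite-to-one if every family $(Y_v:v\in V)$ of subsets of $V$ either contains some $Y_v$ failing the half-trek criterion w.r.t. $v$ or contains a pair with $v\in Y_w$ and $w\in Y_v$. Mixed components: let $C_1,\dots,C_k$ be the node sets of the connected components of $(V,B)$. For $j\in[k]$ let $V_j=C_j\cup\bigcup_{v\in C_j}\mathrm{pa}(v)$, $D_j=\{v\to w\in D: v\in V_j, w\in C_j\}$, $B_j=B\cap(C_j\times C_j)$, and $G_j=(V_j,D_j,B_j)$ (all notions above are applied to $G_j$ with node set $V_j$). *)

theory Defs
  imports Main
begin

record 'a mgraph =
  nodes  :: "'a set"
  dedges :: "('a \<times> 'a) set"
  bedges :: "('a \<times> 'a) set"

definition mixed_graph :: "'a mgraph \<Rightarrow> bool" where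
  "mixed_graph G \<longleftrightarrow> finite (nodes G)
     \<and> dedges G \<subseteq> nodes G \<times> nodes G \<and> bedges G \<subseteq> nodes G \<times> nodes G
     \<and> sym (bedges G)
     \<and> (\<forall>v. (v, v) \<notin> dedges G) \<and> (\<forall>v. (v, v) \<notin> bedges G)"

definition acyclic_mg :: "'a mgraph \<Rightarrow> bool" where
  "acyclic_mg G \<longleftrightarrow> acyclic (dedges G)"

definition pa :: "'a mgraph \<Rightarrow> 'a \<Rightarrow> 'a set" where
  "pa G v = {w. (w, v) \<in> dedges G}"

definition sib :: "'a mgraph \<Rightarrow> 'a \<Rightarrow> 'a set" where
  "sib G v = {w. (w, v) \<in> bedges G}"

text \<open>A half-trek with source y is encoded by a flag b and the list rs of its right-side
  nodes in order.  If b, it is  y <-> rs!0 -> rs!1 -> ... -> last rs  (right side = set rs);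
  if not b, then rs!0 = y and it is  y -> rs!1 -> ... -> last rs  (right side = set rs,
  which contains y; rs = [y] is the trivial half-trek).  The left side is {y} and the target
  is last rs.\<close>

definition is_htrek :: "'a mgraph \<Rightarrow> 'a \<Rightarrow> bool \<Rightarrow> 'a list \<Rightarrow> bool" where
  "is_htrek G y b rs \<longleftrightarrow> rs \<noteq> [] \<and> y \<in> nodes G \<and> set rs \<subseteq> nodes G
     \<and> successively (\<lambda>u w. (u, w) \<in> dedges G) rs
     \<and> (if b then (y, hd rs) \<in> bedges G else hd rs = y)"

definition htr :: "'a mgraph \<Rightarrow> 'a \<Rightarrow> 'a set" where
  "htr G v = {w \<in> nodes G - ({v} \<union> sib G v).
               \<exists>b rs. is_htrek G v b rs \<and> last rs = w}"

text \<open>A system of half-treks from X to Y with no sided intersection: one half-trek h x with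
  source x for each x in X, the targets form Y bijectively, and right sides pairwise disjoint
  (left sides {x} are then automatically pairwise disjoint).\<close>

definition htrek_system :: "'a mgraph \<Rightarrow> 'a set \<Rightarrow> 'a set \<Rightarrow> bool" where
  "htrek_system G X Y \<longleftrightarrow> (\<exists>h :: 'a \<Rightarrow> bool \<times> 'a list.
      (\<forall>x\<in>X. is_htrek G x (fst (h x)) (snd (h x)))
    \<and> bij_betw (\<lambda>x. last (snd (h x))) X Y
    \<and> (\<forall>x\<in>X. \<forall>x'\<in>X. x \<noteq> x' \<longrightarrow> set (snd (h x)) \<inter> set (snd (h x')) = {}))"

definition HTC :: "'a mgraph \<Rightarrow> 'a set \<Rightarrow> 'a \<Rightarrow> bool" where
  "HTC G Y v \<longleftrightarrow> Y \<subseteq> nodes G \<and> card Y = card (pa G v)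
     \<and> Y \<inter> ({v} \<union> sib G v) = {} \<and> htrek_system G Y (pa G v)"

definition HTC_identifiable :: "'a mgraph \<Rightarrow> bool" where
  "HTC_identifiable G \<longleftrightarrow> (\<exists>(Y :: 'a \<Rightarrow> 'a set) r.
      strict_linear_order_on (nodes G) r
    \<and> (\<forall>v\<in>nodes G. HTC G (Y v) v \<and> (\<forall>w \<in> Y v \<inter> htr G v. (w, v) \<in> r)))"

definition HTC_infinite_to_one :: "'a mgraph \<Rightarrow> bool" where
  "HTC_infinite_to_one G \<longleftrightarrow> (\<forall>Y :: 'a \<Rightarrow> 'a set. (\<forall>v\<in>nodes G. Y v \<subseteq> nodes G) \<longrightarrow>
      (\<exists>v\<in>nodes G. \<not> HTC G (Y v) v)
    \<or> (\<exists>v\<in>nodes G. \<exists>w\<in>nodes G. v \<in> Y w \<and> w \<in> Y v))"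

definition mixed_comps :: "'a mgraph \<Rightarrow> 'a set set" where
  "mixed_comps G = {C. \<exists>v\<in>nodes G. C = {w \<in> nodes G. (v, w) \<in> (bedges G)\<^sup>*}}"

definition comp_graph :: "'a mgraph \<Rightarrow> 'a set \<Rightarrow> 'a mgraph" where
  "comp_graph G C =
     (let VC = C \<union> (\<Union>v\<in>C. pa G v) in
      \<lparr> nodes = VC,
        dedges = {(v, w) \<in> dedges G. v \<in> VC \<and> w \<in> C},
        bedges = bedges G \<inter> (C \<times> C) \<rparr>)"

end

theory Submission
  imports Defs
begin

(* Fix a set C of nodes closed under bidirected edges (a union of bidirected components)
   and the graph G_C it induces (comp_graph G C).  Half-treks of G_C are half-treks of G,
   so criteria and the "half-trek reachable" sets transfer from G_C to G.  Conversely, a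
   half-trek of G ending in a parent of some v in C can be cut at the last node outside C;
   the remaining piece is a half-trek of G_C whose source lies on the original right side.
   Cutting a whole system this way keeps right sides disjoint, so every half-trek criterion
   for v in G yields one in G_C whose sources inside C are among the old ones.  This
   truncation gives: identifiability passes to the components, and a witness against
   infinite-to-one-ness of G restricts to each component.  For the converse, witnesses of the
   components are glued; a source outside the component of v reaches v by a directed path,
   so a mutual pair across components would be a directed cycle, excluded by acyclicity. *)

lemma successively_restrict:
  "successively (\<lambda>u w. (u, w) \<in> D) xs \<Longrightarrow> set xs \<subseteq> A \<Longrightarrow> set (tl xs) \<subseteq> C \<Longrightarrow>
   successively (\<lambda>u w. (u, w) \<in> {(v, w) \<in> D. v \<in> A \<and> w \<in> C}) xs"
  by (induction xs rule: induct_list012) auto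

lemma successively_rtrancl:
  "successively (\<lambda>u w. (u, w) \<in> R) xs \<Longrightarrow> xs \<noteq> [] \<Longrightarrow> (hd xs, last xs) \<in> R\<^sup>*"
proof (induction xs rule: induct_list012)
  case (3 x y zs)
  then have "(y, last (y # zs)) \<in> R\<^sup>*" by simp
  with 3 show ?case by auto
qed auto

definition put_last :: "'a set \<Rightarrow> 'a set \<Rightarrow> 'a rel \<Rightarrow> 'a rel" where
  "put_last W C r = {(a, b). a \<in> W \<and> b \<in> W \<and>
      (a \<notin> C \<and> b \<in> C \<or> (a \<in> C \<longleftrightarrow> b \<in> C) \<and> (a, b) \<in> r)}"

lemma strict_linear_order_put_last:
  assumes "strict_linear_order_on V r" and "W \<subseteq> V"
  shows "strict_linear_order_on W (put_last W C r)"
proof -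
  have "trans r" "irrefl r" "total_on V r"
    using assms(1) unfolding strict_linear_order_on_def by auto
  have "trans (put_last W C r)" using \<open>trans r\<close> unfolding put_last_def trans_def by blast
  moreover have "irrefl (put_last W C r)" using \<open>irrefl r\<close> unfolding put_last_def irrefl_def by blast
  moreover have "total_on W (put_last W C r)"
    using \<open>total_on V r\<close> assms(2) unfolding put_last_def total_on_def by blast
  ultimately show ?thesis unfolding strict_linear_order_on_def by blast
qed

section \<open>The graph induced by a bidirected-closed node set\<close>

locale closed_part =
  fixes G :: "'a mgraph" and C :: "'a set"
  assumes mg: "mixed_graph G" and C_nodes: "C \<subseteq> nodes G"
    and closed: "\<And>u x. u \<in> C \<Longrightarrow> (u, x) \<in> bedges G \<Longrightarrow> x \<in> C"
begin

abbreviation GC :: "'a mgraph" where "GC \<equiv> comp_graph G C"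

lemma closed': "u \<in> C \<Longrightarrow> (x, u) \<in> bedges G \<Longrightarrow> x \<in> C"
  using mg closed unfolding mixed_graph_def by (meson symD)

lemma nodes_GC: "nodes GC = C \<union> (\<Union>v\<in>C. pa G v)"
  and dedges_GC: "dedges GC = {(v, w) \<in> dedges G. v \<in> nodes GC \<and> w \<in> C}"
  and bedges_GC: "bedges GC = bedges G \<inter> (C \<times> C)"
  by (simp_all add: comp_graph_def Let_def)

lemma nodes_GC_sub: "nodes GC \<subseteq> nodes G"
  using C_nodes mg unfolding nodes_GC pa_def mixed_graph_def by auto

lemma pa_GC: "v \<in> C \<Longrightarrow> pa GC v = pa G v"
  unfolding pa_def dedges_GC nodes_GC by auto

lemma pa_GC_outside: "v \<notin> C \<Longrightarrow> pa GC v = {}"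
  unfolding pa_def dedges_GC by auto

lemma sib_GC: "v \<in> C \<Longrightarrow> sib GC v = sib G v"
  unfolding sib_def bedges_GC using closed' by auto

lemma sib_in_C: "v \<in> C \<Longrightarrow> sib G v \<subseteq> C"
  unfolding sib_def using closed' by auto

lemma htrek_GC: "is_htrek GC y b rs \<Longrightarrow> is_htrek G y b rs"
  unfolding is_htrek_def using nodes_GC_sub
  by (auto simp: dedges_GC bedges_GC elim!: successively_mono split: if_splits)

lemma htr_GC: "v \<in> C \<Longrightarrow> htr GC v \<subseteq> htr G v"
  unfolding htr_def using nodes_GC_sub htrek_GC sib_GC by fastforce

lemma HTC_GC: assumes "v \<in> C" and "HTC GC Y v" shows "HTC G Y v"
proof -
  have "htrek_system GC Y (pa G v)" using assms pa_GC unfolding HTC_def by auto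
  then have "htrek_system G Y (pa G v)" unfolding htrek_system_def using htrek_GC by blast
  then show ?thesis using assms nodes_GC_sub pa_GC sib_GC unfolding HTC_def by auto
qed

text \<open>Nodes outside C have no parents in G_C, so the empty set satisfies the criterion.\<close>

lemma HTC_GC_outside: "v \<notin> C \<Longrightarrow> HTC GC {} v"
  unfolding HTC_def htrek_system_def using pa_GC_outside by (auto simp: bij_betw_def)

text \<open>A source outside C of a criterion for v in G_C cannot start with a bidirected
  edge, hence it reaches a parent of v, and so v itself, by a directed path.\<close>

lemma HTC_GC_source_outside:
  assumes "v \<in> C" and "HTC GC Y v" and "y \<in> Y" and "y \<notin> C"
  shows "(y, v) \<in> (dedges G)\<^sup>+"
proof -
  from assms obtain h where h: "\<forall>x\<in>Y. is_htrek GC x (fst (h x)) (snd (h x))"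
    "bij_betw (\<lambda>x. last (snd (h x))) Y (pa GC v)"
    unfolding HTC_def htrek_system_def by blast
  let ?rs = "snd (h y)"
  have ht: "is_htrek GC y (fst (h y)) ?rs" using h assms by auto
  have "last ?rs \<in> pa G v" using h(2) assms pa_GC by (auto dest: bij_betwE)
  then have last_edge: "(last ?rs, v) \<in> dedges G" unfolding pa_def by auto
  have "\<not> fst (h y)" using ht assms(4) unfolding is_htrek_def bedges_GC by auto
  then have "hd ?rs = y" "?rs \<noteq> []" "successively (\<lambda>u w. (u, w) \<in> dedges G) ?rs"
    using ht unfolding is_htrek_def by (auto simp: dedges_GC elim!: successively_mono)
  then have "(y, last ?rs) \<in> (dedges G)\<^sup>*" using successively_rtrancl by metis
  with last_edge show ?thesis by auto
qed

subsection \<open>From G to G_C: truncating half-treks\<close>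

lemma htrek_inside:
  assumes "is_htrek G y b rs" and "set rs \<subseteq> C"
  shows "y \<in> C" and "is_htrek GC y b rs"
proof -
  have rs: "rs \<noteq> []" "successively (\<lambda>u w. (u, w) \<in> dedges G) rs"
    and start: "if b then (y, hd rs) \<in> bedges G else hd rs = y"
    using assms(1) unfolding is_htrek_def by auto
  have "hd rs \<in> C" using assms(2) rs(1) by auto
  then show yC: "y \<in> C" using start closed' by (auto split: if_splits)
  have "set rs \<subseteq> nodes GC" using assms(2) unfolding nodes_GC by auto
  moreover have "set (tl rs) \<subseteq> C" using assms(2) by (cases rs) auto
  ultimately have "successively (\<lambda>u w. (u, w) \<in> dedges GC) rs"
    using successively_restrict[OF rs(2)] unfolding dedges_GC by simp
  then show "is_htrek GC y b rs"
    using \<open>set rs \<subseteq> nodes GC\<close> yC \<open>hd rs \<in> C\<close> start rs(1)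
    unfolding is_htrek_def bedges_GC nodes_GC by auto
qed

text \<open>A directed path u, then nodes bs in C, ending in a node of G_C, is a directed
  half-trek of G_C: u is either that end node or a parent of a node in C.\<close>

lemma htrek_tail:
  assumes "successively (\<lambda>u w. (u, w) \<in> dedges G) (u # bs)" and "set bs \<subseteq> C"
    and "last (u # bs) \<in> nodes GC"
  shows "is_htrek GC u False (u # bs)"
proof -
  have "u \<in> nodes GC"
  proof (cases bs)
    case Nil
    then show ?thesis using assms(3) by simp
  next
    case (Cons b bs')
    then have "u \<in> pa G b" "b \<in> C" using assms(1,2) unfolding pa_def by auto
    then show ?thesis unfolding nodes_GC by auto
  qed
  then have in_GC: "set (u # bs) \<subseteq> nodes GC" using assms(2) unfolding nodes_GC by auto
  then show ?thesis
    using successively_restrict[OF assms(1) in_GC, of C] assms(2) \<open>u \<in> nodes GC\<close>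
    unfolding is_htrek_def dedges_GC by simp
qed

text \<open>Truncation of one half-trek ending in a parent of v in C: either it lies in C
  (and keeps its source), or we cut it at its last node outside C.\<close>

lemma htrek_truncate:
  assumes "v \<in> C" and "is_htrek G y b rs" and "last rs \<in> pa G v"
  obtains y' b' rs' where "is_htrek GC y' b' rs'" "last rs' = last rs" "set rs' \<subseteq> set rs"
    "y' \<in> set rs \<and> y' \<notin> C \<or> y' = y \<and> y \<in> C"
proof -
  define bs where "bs = rev (takeWhile (\<lambda>x. x \<in> C) (rev rs))"
  define as where "as = rev (dropWhile (\<lambda>x. x \<in> C) (rev rs))"
  have rs: "rs = as @ bs" unfolding as_def bs_def
    by (metis rev_append rev_rev_ident takeWhile_dropWhile_id)
  have bsC: "set bs \<subseteq> C" unfolding bs_def by (auto dest: set_takeWhileD)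
  have path: "successively (\<lambda>u w. (u, w) \<in> dedges G) rs"
    using assms(2) unfolding is_htrek_def by auto
  show ?thesis
  proof (cases "as = []")
    case True
    then have "set rs \<subseteq> C" using rs bsC by simp
    then show ?thesis using htrek_inside[OF assms(2)] that by blast
  next
    case False
    then have "dropWhile (\<lambda>x. x \<in> C) (rev rs) \<noteq> []" unfolding as_def by auto
    then have cut_out: "last as \<notin> C" unfolding as_def last_rev using hd_dropWhile by metis
    have "successively (\<lambda>u w. (u, w) \<in> dedges G) (last as # bs)"
      using path False unfolding rs successively_append_iff
      by (auto simp: successively_Cons)
    moreover have last_eq: "last (last as # bs) = last rs"
      using rs False by (cases "bs = []") auto
    moreover have "last rs \<in> nodes GC" using assms(1,3) unfolding nodes_GC by auto
    ultimately have "is_htrek GC (last as) False (last as # bs)"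
      using htrek_tail bsC by simp
    moreover have "set (last as # bs) \<subseteq> set rs" "last as \<in> set rs" using False rs by auto
    ultimately show ?thesis using that last_eq cut_out by blast
  qed
qed

end

lemma htrek_system_reroute:
  assumes targets: "bij_betw (\<lambda>x. last (snd (h x))) Y P"
    and disjoint: "\<forall>x\<in>Y. \<forall>x'\<in>Y. x \<noteq> x' \<longrightarrow> set (snd (h x)) \<inter> set (snd (h x')) = {}"
    and inj: "inj_on g Y"
    and new: "\<And>x. x \<in> Y \<Longrightarrow> is_htrek G' (g x) (fst (k x)) (snd (k x))"
    and same_target: "\<And>x. x \<in> Y \<Longrightarrow> last (snd (k x)) = last (snd (h x))"
    and smaller: "\<And>x. x \<in> Y \<Longrightarrow> set (snd (k x)) \<subseteq> set (snd (h x))"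
  shows "htrek_system G' (g ` Y) P"
  unfolding htrek_system_def
proof (intro exI[of _ "k \<circ> inv_into Y g"] conjI ballI impI)
  have ginv: "x \<in> Y \<Longrightarrow> inv_into Y g (g x) = x" for x using inj by simp
  show "is_htrek G' z (fst ((k \<circ> inv_into Y g) z)) (snd ((k \<circ> inv_into Y g) z))"
    if "z \<in> g ` Y" for z using that new ginv by auto
  have "bij_betw (inv_into Y g) (g ` Y) Y"
    by (rule bij_betw_inv_into[OF inj_on_imp_bij_betw[OF inj]])
  from bij_betw_trans[OF this targets]
  show "bij_betw (\<lambda>z. last (snd ((k \<circ> inv_into Y g) z))) (g ` Y) P"
    by (rule bij_betw_cong[THEN iffD1, rotated]) (auto simp: ginv same_target)
  show "set (snd ((k \<circ> inv_into Y g) z)) \<inter> set (snd ((k \<circ> inv_into Y g) z')) = {}"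
    if "z \<in> g ` Y" "z' \<in> g ` Y" "z \<noteq> z'" for z z'
  proof -
    from that obtain x x' where "x \<in> Y" "x' \<in> Y" "z = g x" "z' = g x'" "x \<noteq> x'" by auto
    then have "set (snd (h x)) \<inter> set (snd (h x')) = {}" using disjoint by blast
    then show ?thesis using \<open>x \<in> Y\<close> \<open>x' \<in> Y\<close> \<open>z = g x\<close> \<open>z' = g x'\<close>
        smaller[of x] smaller[of x'] by (auto simp: ginv)
  qed
qed

context closed_part
begin

lemma HTC_truncate:
  assumes v: "v \<in> C" and H: "HTC G Y v"
  obtains Y' where "HTC GC Y' v" "Y' \<inter> C \<subseteq> Y"
proof -
  from H obtain h where h_treks: "\<forall>x\<in>Y. is_htrek G x (fst (h x)) (snd (h x))"
    and targets: "bij_betw (\<lambda>x. last (snd (h x))) Y (pa G v)"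
    and disjoint: "\<forall>x\<in>Y. \<forall>x'\<in>Y. x \<noteq> x' \<longrightarrow> set (snd (h x)) \<inter> set (snd (h x')) = {}"
    unfolding HTC_def htrek_system_def by blast
  have "\<forall>x\<in>Y. \<exists>y' k. is_htrek GC y' (fst k) (snd k) \<and> last (snd k) = last (snd (h x))
      \<and> set (snd k) \<subseteq> set (snd (h x)) \<and> (y' \<in> set (snd (h x)) \<and> y' \<notin> C \<or> y' = x \<and> x \<in> C)"
    (is "\<forall>x\<in>Y. \<exists>y' k. ?truncated x y' k")
  proof
    fix x assume "x \<in> Y"
    then have "last (snd (h x)) \<in> pa G v" using targets by (auto dest: bij_betwE)
    from htrek_truncate[OF v h_treks[rule_format, OF \<open>x \<in> Y\<close>] this] show "\<exists>y' k. ?truncated x y' k"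
      by (metis fst_conv snd_conv)
  qed
  then obtain g k where "\<forall>x\<in>Y. ?truncated x (g x) (k x)" by metis
  then have trek: "\<And>x. x \<in> Y \<Longrightarrow> is_htrek GC (g x) (fst (k x)) (snd (k x))"
    and same_target: "\<And>x. x \<in> Y \<Longrightarrow> last (snd (k x)) = last (snd (h x))"
    and smaller: "\<And>x. x \<in> Y \<Longrightarrow> set (snd (k x)) \<subseteq> set (snd (h x))"
    and source: "\<And>x. x \<in> Y \<Longrightarrow> g x \<in> set (snd (h x)) \<and> g x \<notin> C \<or> g x = x \<and> x \<in> C"
    by auto
  text \<open>New sources are distinct: outside C they lie on disjoint right sides, inside C
    they are the old (distinct) sources.\<close>
  have "inj_on g Y"
  proof (rule inj_onI, rule ccontr)
    fix x x' assume "x \<in> Y" "x' \<in> Y" "g x = g x'" "x \<noteq> x'"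
    then show False
      using source[of x] source[of x'] disjoint[rule_format, of x x'] by auto
  qed
  then have "htrek_system GC (g ` Y) (pa G v)"
    using htrek_system_reroute[OF targets disjoint _ trek same_target smaller] by blast
  moreover have "card (g ` Y) = card (pa G v)"
    using calculation unfolding htrek_system_def by (auto intro: bij_betw_same_card)
  moreover have "g ` Y \<subseteq> nodes GC" using trek unfolding is_htrek_def by auto
  moreover have "g ` Y \<inter> ({v} \<union> sib GC v) = {}"
    using H source v sib_in_C sib_GC unfolding HTC_def by fastforce
  moreover have "g ` Y \<inter> C \<subseteq> Y" using source by force
  ultimately show ?thesis using that v pa_GC unfolding HTC_def by auto
qed

lemma HTC_family_truncate:
  assumes "\<forall>v\<in>nodes G. HTC G (Y v) v"
  obtains Y' where "\<forall>v\<in>nodes GC. HTC GC (Y' v) v" "\<forall>v. Y' v \<inter> C \<subseteq> Y v"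
    "\<forall>v. v \<notin> C \<longrightarrow> Y' v = {}"
proof -
  have "\<forall>v\<in>C. \<exists>Y'. HTC GC Y' v \<and> Y' \<inter> C \<subseteq> Y v"
    using HTC_truncate assms C_nodes by (metis subsetD)
  then obtain Y0 where Y0: "\<forall>v\<in>C. HTC GC (Y0 v) v \<and> Y0 v \<inter> C \<subseteq> Y v" by metis
  show ?thesis
    using that[of "\<lambda>v. if v \<in> C then Y0 v else {}"] Y0 HTC_GC_outside by auto
qed

lemma identifiable_GC:
  assumes "HTC_identifiable G" shows "HTC_identifiable GC"
proof -
  obtain Y r where r: "strict_linear_order_on (nodes G) r"
    and Y: "\<forall>v\<in>nodes G. HTC G (Y v) v \<and> (\<forall>w\<in>Y v \<inter> htr G v. (w, v) \<in> r)"
    using assms unfolding HTC_identifiable_def by blast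
  obtain Y' where Y'_HTC: "\<forall>v\<in>nodes GC. HTC GC (Y' v) v" and Y'_old: "\<forall>v. Y' v \<inter> C \<subseteq> Y v"
    and Y'_outside: "\<forall>v. v \<notin> C \<longrightarrow> Y' v = {}"
    using HTC_family_truncate Y by blast
  let ?r' = "put_last (nodes GC) C r"
  have "(w, v) \<in> ?r'" if v: "v \<in> nodes GC" and w: "w \<in> Y' v \<inter> htr GC v" for v w
  proof -
    have "v \<in> C" using w Y'_outside by auto
    moreover have "w \<in> nodes GC" using Y'_HTC v w unfolding HTC_def by auto
    moreover have "w \<in> C \<Longrightarrow> (w, v) \<in> r"
      using Y Y'_old w htr_GC[OF \<open>v \<in> C\<close>] C_nodes \<open>v \<in> C\<close> by blast
    ultimately show ?thesis using v unfolding put_last_def by auto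
  qed
  moreover have "strict_linear_order_on (nodes GC) ?r'"
    using strict_linear_order_put_last[OF r nodes_GC_sub] .
  ultimately show ?thesis using Y'_HTC unfolding HTC_identifiable_def by blast
qed

lemma not_infinite_to_one_GC:
  assumes "\<not> HTC_infinite_to_one G" shows "\<not> HTC_infinite_to_one GC"
proof -
  obtain Y where Y: "\<forall>v\<in>nodes G. HTC G (Y v) v"
    and no_pair: "\<not> (\<exists>v\<in>nodes G. \<exists>w\<in>nodes G. v \<in> Y w \<and> w \<in> Y v)"
    using assms unfolding HTC_infinite_to_one_def by blast
  obtain Y' where Y'_HTC: "\<forall>v\<in>nodes GC. HTC GC (Y' v) v" and Y'_old: "\<forall>v. Y' v \<inter> C \<subseteq> Y v"
    and Y'_outside: "\<forall>v. v \<notin> C \<longrightarrow> Y' v = {}"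
    using HTC_family_truncate Y by blast
  have "\<not> (v \<in> Y' w \<and> w \<in> Y' v)" for v w
    using no_pair Y'_old Y'_outside C_nodes by blast
  moreover have "\<forall>v\<in>nodes GC. Y' v \<subseteq> nodes GC" using Y'_HTC unfolding HTC_def by auto
  ultimately show ?thesis using Y'_HTC unfolding HTC_infinite_to_one_def by blast
qed

end

section \<open>Mixed components\<close>

definition bcomp :: "'a mgraph \<Rightarrow> 'a \<Rightarrow> 'a set" where
  "bcomp G v = {w \<in> nodes G. (v, w) \<in> (bedges G)\<^sup>*}"

lemma mixed_comps_bcomp: "mixed_comps G = bcomp G ` nodes G"
  unfolding mixed_comps_def bcomp_def by auto

lemma bcomp_self: "v \<in> nodes G \<Longrightarrow> v \<in> bcomp G v"
  unfolding bcomp_def by auto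

lemma bcomp_eq: assumes "mixed_graph G" and "v \<in> bcomp G u" shows "bcomp G v = bcomp G u"
proof -
  have "sym ((bedges G)\<^sup>*)" using assms(1) sym_rtrancl unfolding mixed_graph_def by blast
  moreover have "(u, v) \<in> (bedges G)\<^sup>*" using assms(2) unfolding bcomp_def by auto
  ultimately show ?thesis unfolding bcomp_def by (meson symD rtrancl_trans)
qed

lemma closed_part_comp:
  assumes "mixed_graph G" and "C \<in> mixed_comps G" shows "closed_part G C"
proof
  obtain c where C: "C = {w \<in> nodes G. (c, w) \<in> (bedges G)\<^sup>*}"
    using assms(2) unfolding mixed_comps_def by blast
  show "mixed_graph G" "C \<subseteq> nodes G" using assms(1) C by auto
  show "x \<in> C" if "u \<in> C" "(u, x) \<in> bedges G" for u x
    using that assms(1) C unfolding mixed_graph_def by (auto intro: rtrancl_into_rtrancl)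
qed

lemma in_comp_graph: "v \<in> nodes G \<Longrightarrow> v \<in> nodes (comp_graph G (bcomp G v))"
  using bcomp_self[of v G] by (simp add: comp_graph_def Let_def)

lemma not_infinite_to_one_glue:
  assumes mg: "mixed_graph G" and ac: "acyclic_mg G"
    and comps: "\<forall>C\<in>mixed_comps G. \<not> HTC_infinite_to_one (comp_graph G C)"
  shows "\<not> HTC_infinite_to_one G"
proof -
  from comps obtain F where F_HTC:
      "\<forall>C\<in>mixed_comps G. \<forall>v\<in>nodes (comp_graph G C). HTC (comp_graph G C) (F C v) v"
    and F_no_pair: "\<forall>C\<in>mixed_comps G. \<forall>v\<in>nodes (comp_graph G C).
        \<forall>w\<in>nodes (comp_graph G C). \<not> (v \<in> F C w \<and> w \<in> F C v)"
    unfolding HTC_infinite_to_one_def by metis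
  define Y where "Y v = F (bcomp G v) v" for v
  have HTC_Y: "HTC G (Y v) v" and
    far_source: "\<And>w. w \<in> Y v \<Longrightarrow> w \<notin> bcomp G v \<Longrightarrow> (w, v) \<in> (dedges G)\<^sup>+"
    if v: "v \<in> nodes G" for v
  proof -
    have comp: "bcomp G v \<in> mixed_comps G" using v mixed_comps_bcomp by blast
    interpret closed_part G "bcomp G v" using closed_part_comp mg comp by blast
    have "HTC GC (Y v) v" using F_HTC comp in_comp_graph[OF v] unfolding Y_def by blast
    then show "HTC G (Y v) v" "\<And>w. w \<in> Y v \<Longrightarrow> w \<notin> bcomp G v \<Longrightarrow> (w, v) \<in> (dedges G)\<^sup>+"
      using HTC_GC HTC_GC_source_outside bcomp_self[OF v] by blast+
  qed
  have "False" if "v \<in> nodes G" "w \<in> nodes G" "v \<in> Y w" "w \<in> Y v" for v w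
  proof (cases "bcomp G v = bcomp G w")
    case True
    then show False
      using that F_no_pair in_comp_graph mixed_comps_bcomp unfolding Y_def by (metis imageI)
  next
    case False
    then have "(v, w) \<in> (dedges G)\<^sup>+" "(w, v) \<in> (dedges G)\<^sup>+"
      using far_source that bcomp_eq[OF mg] by metis+
    then show False using ac unfolding acyclic_mg_def acyclic_def by (meson trancl_trans)
  qed
  moreover have "\<forall>v\<in>nodes G. Y v \<subseteq> nodes G" using HTC_Y unfolding HTC_def by auto
  ultimately show ?thesis using HTC_Y unfolding HTC_infinite_to_one_def by blast
qed

theorem mainTheorem12:
  fixes G :: "'a mgraph"
  assumes "mixed_graph G" and "acyclic_mg G"
  shows "(HTC_identifiable G \<longrightarrow> (\<forall>C\<in>mixed_comps G. HTC_identifiable (comp_graph G C)))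
       \<and> (HTC_infinite_to_one G \<longleftrightarrow> (\<exists>C\<in>mixed_comps G. HTC_infinite_to_one (comp_graph G C)))"
proof (intro conjI impI ballI iffI)
  fix C assume "HTC_identifiable G" "C \<in> mixed_comps G"
  then show "HTC_identifiable (comp_graph G C)"
    using closed_part.identifiable_GC[OF closed_part_comp[OF assms(1)]] by blast
next
  assume "HTC_infinite_to_one G"
  then show "\<exists>C\<in>mixed_comps G. HTC_infinite_to_one (comp_graph G C)"
    using not_infinite_to_one_glue[OF assms] by blast
next
  assume "\<exists>C\<in>mixed_comps G. HTC_infinite_to_one (comp_graph G C)"
  then show "HTC_infinite_to_one G"
    using closed_part.not_infinite_to_one_GC[OF closed_part_comp[OF assms(1)]] by blast
qed

end
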